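(* Let $A, C, D$ be binary random variables, with $A$ taking values $a,\overline{a}$, $C$ taking values $c,\overline{c}$, $D$ taking values $d,\overline{d}$, and let $Y$ be a real random variable with finite expectation. Suppose the joint distribution factorizes as \[ p(A,C,D,Y)=p(D)\,p(C\mid D)\,p(A\mid C)\,p(Y\mid A,C). \] Assume that $C$ and $D$ are dependent, and that every event $\{A=x, C=y, D=z\}$ has positive probability. For $x\in\{a,\overline{a}\}$ let $E[Y_x]=E[Y|x,c]p(c)+E[Y|x,\overline{c}]p(\overline{c})$, and let $S_x$ denote either $S_x=E[Y|x,d]p(d)+E[Y|x,\overline{d}]p(\overline{d})$ or $S_x=E[Y|x]$ (the claim holds for each of these two choices). Then: (i) if $E[Y\mid a,D]$ and $E[A\mid D]$ are both nondecreasing or both nonincreasing in $D$, then $S_a\ge E[Y_a]$; if they are one nondecreasing and the other nonincreasing in $D$, then $S_a\le E[Y_a]$; (ii) if $E[Y\mid \overline{a},D]$ and $E[A\mid D]$ are both nondecreasing or both nonincreasing in $D$, then $S_{\overline{a}}\le E[Y_{\overline{a}}]$; if they are one nondecreasing and the other nonincreasing in $D$, then $S_{\overline{a}}\ge E[Y_{\overline{a}}]$.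
   Context: For $x\in\{a,\overline{a}\}$, $E[Y\mid x,D]$ is nondecreasing in $D$ if $E[Y\mid x,d]\ge E[Y\mid x,\overline{d}]$ and nonincreasing in $D$ if $E[Y\mid x,d]\le E[Y\mid x,\overline{d}]$. With $A$ coded as $a=1$, $\overline{a}=0$, $E[A\mid D]=p(a\mid D)$ is nondecreasing in $D$ if $p(a\mid d)\ge p(a\mid\overline{d})$ and nonincreasing if $p(a\mid d)\le p(a\mid\overline{d})$. $E[Y_x]$ is the causal effect on $Y$ of setting $A=x$ (expressed by the adjustment formula above). *)

theory Defs
  imports "HOL-Probability.Probability"
begin

text \<open>Events are given by predicates on the sample space. Binary variables are
  modelled as bool-valued random variables, with a = True, c = True, d = True.\<close>

definition pr :: "'a measure \<Rightarrow> ('a \<Rightarrow> bool) \<Rightarrow> real" where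
  "pr M P = measure M {\<omega> \<in> space M. P \<omega>}"

definition cprob :: "'a measure \<Rightarrow> ('a \<Rightarrow> bool) \<Rightarrow> ('a \<Rightarrow> bool) \<Rightarrow> real" where
  "cprob M P Q = pr M (\<lambda>\<omega>. P \<omega> \<and> Q \<omega>) / pr M Q"

definition cexp :: "'a measure \<Rightarrow> ('a \<Rightarrow> real) \<Rightarrow> ('a \<Rightarrow> bool) \<Rightarrow> real" where
  "cexp M Y Q = (LINT \<omega>:{\<omega> \<in> space M. Q \<omega>}|M. Y \<omega>) / pr M Q"

definition causal_eff :: "'a measure \<Rightarrow> ('a \<Rightarrow> bool) \<Rightarrow> ('a \<Rightarrow> bool) \<Rightarrow> ('a \<Rightarrow> real) \<Rightarrow> bool \<Rightarrow> real" where
  "causal_eff M A C Y x =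
     cexp M Y (\<lambda>\<omega>. A \<omega> = x \<and> C \<omega>) * pr M C
   + cexp M Y (\<lambda>\<omega>. A \<omega> = x \<and> \<not> C \<omega>) * pr M (\<lambda>\<omega>. \<not> C \<omega>)"

definition S_adjD :: "'a measure \<Rightarrow> ('a \<Rightarrow> bool) \<Rightarrow> ('a \<Rightarrow> bool) \<Rightarrow> ('a \<Rightarrow> real) \<Rightarrow> bool \<Rightarrow> real" where
  "S_adjD M A D Y x =
     cexp M Y (\<lambda>\<omega>. A \<omega> = x \<and> D \<omega>) * pr M D
   + cexp M Y (\<lambda>\<omega>. A \<omega> = x \<and> \<not> D \<omega>) * pr M (\<lambda>\<omega>. \<not> D \<omega>)"

definition S_obs :: "'a measure \<Rightarrow> ('a \<Rightarrow> bool) \<Rightarrow> ('a \<Rightarrow> real) \<Rightarrow> bool \<Rightarrow> real" where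
  "S_obs M A Y x = cexp M Y (\<lambda>\<omega>. A \<omega> = x)"

definition EY_nondec :: "'a measure \<Rightarrow> ('a \<Rightarrow> bool) \<Rightarrow> ('a \<Rightarrow> bool) \<Rightarrow> ('a \<Rightarrow> real) \<Rightarrow> bool \<Rightarrow> bool" where
  "EY_nondec M A D Y x \<longleftrightarrow>
     cexp M Y (\<lambda>\<omega>. A \<omega> = x \<and> D \<omega>) \<ge> cexp M Y (\<lambda>\<omega>. A \<omega> = x \<and> \<not> D \<omega>)"

definition EY_noninc :: "'a measure \<Rightarrow> ('a \<Rightarrow> bool) \<Rightarrow> ('a \<Rightarrow> bool) \<Rightarrow> ('a \<Rightarrow> real) \<Rightarrow> bool \<Rightarrow> bool" where
  "EY_noninc M A D Y x \<longleftrightarrow>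
     cexp M Y (\<lambda>\<omega>. A \<omega> = x \<and> D \<omega>) \<le> cexp M Y (\<lambda>\<omega>. A \<omega> = x \<and> \<not> D \<omega>)"

definition EA_nondec :: "'a measure \<Rightarrow> ('a \<Rightarrow> bool) \<Rightarrow> ('a \<Rightarrow> bool) \<Rightarrow> bool" where
  "EA_nondec M A D \<longleftrightarrow> cprob M A D \<ge> cprob M A (\<lambda>\<omega>. \<not> D \<omega>)"

definition EA_noninc :: "'a measure \<Rightarrow> ('a \<Rightarrow> bool) \<Rightarrow> ('a \<Rightarrow> bool) \<Rightarrow> bool" where
  "EA_noninc M A D \<longleftrightarrow> cprob M A D \<le> cprob M A (\<lambda>\<omega>. \<not> D \<omega>)"

end

theory Submission
  imports Defs
begin

text \<open>Fix \<open>x\<close> and write \<open>m\<^sub>y = E[Y | x, C = y]\<close>, \<open>s\<^sub>y = p(x | C = y)\<close> and \<open>r\<^sub>y = p(a | C = y)\<close>.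
  The factorization makes \<open>Y\<close> independent of \<open>D\<close> given \<open>(A, C)\<close> and \<open>A\<close> independent of \<open>D\<close>
  given \<open>C\<close>. Hence \<open>E[Y | x, D = z]\<close> and \<open>E[Y | x]\<close> are weighted means of \<open>m\<^sub>1, m\<^sub>0\<close> with
  weights \<open>p(C = y | D = z) s\<^sub>y\<close> and \<open>p(C = y) s\<^sub>y\<close>, \<open>p(a | D = z)\<close> is the mean of \<open>r\<close> with weights
  \<open>p(C = y | D = z)\<close>, and \<open>E[Y\<^sub>x]\<close> is the mean of \<open>m\<close> with weights \<open>p(C = y)\<close>.
  Two weighted means of the same two values differ by \<open>m\<^sub>1 - m\<^sub>0\<close> times a positive multiple of
  the cross difference \<open>w\<^sub>1 v\<^sub>0 - w\<^sub>0 v\<^sub>1\<close> of the weights. So both choices of \<open>S\<^sub>x - E[Y\<^sub>x]\<close> have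
  the sign of \<open>(m\<^sub>1 - m\<^sub>0)(s\<^sub>1 - s\<^sub>0)\<close>, while the two trends in \<open>D\<close> have the signs of
  \<open>(m\<^sub>1 - m\<^sub>0) \<delta>\<close> and \<open>(r\<^sub>1 - r\<^sub>0) \<delta>\<close> with \<open>\<delta> = p(c | d) - p(c | \<not>d)\<close>, which is nonzero because
  \<open>C\<close> and \<open>D\<close> are dependent. As \<open>s = r\<close> for \<open>x = a\<close> and \<open>s = 1 - r\<close> for \<open>x = \<not>a\<close>, the bias
  of \<open>S\<^sub>x\<close> has the sign of the product of the trends for \<open>a\<close> and the opposite sign for \<open>\<not>a\<close>.\<close>

section \<open>Weighted means of two values\<close>

definition wmean :: "('b::finite \<Rightarrow> real) \<Rightarrow> ('b \<Rightarrow> real) \<Rightarrow> real" where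
  "wmean w u = (\<Sum>y\<in>UNIV. w y * u y) / (\<Sum>y\<in>UNIV. w y)"

lemma wmean_distribution: "(\<Sum>y\<in>UNIV. t y) = 1 \<Longrightarrow> wmean t u = (\<Sum>y\<in>UNIV. t y * u y)"
  by (simp add: wmean_def)

lemma wmean_scale: "c \<noteq> 0 \<Longrightarrow> wmean (\<lambda>y. c * w y) u = wmean w u"
  by (simp add: wmean_def sum_distrib_left[symmetric] mult.assoc)

lemma sgn_wmean_diff:
  assumes "\<And>y. 0 < w y" "\<And>y. 0 < v y"
  shows "sgn (wmean w u - wmean v u) = sgn (u True - u False) * sgn (w True * v False - w False * v True)"
proof -
  have total_pos: "0 < w True + w False" "0 < v True + v False"
    using assms[of True] assms[of False] by simp_all
  then have "wmean w u - wmean v u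
      = (u True - u False) * (w True * v False - w False * v True) / ((w True + w False) * (v True + v False))"
    by (simp add: wmean_def UNIV_bool field_simps)
  then show ?thesis
    using total_pos by (simp add: sgn_mult)
qed

lemma sgn_wmean_reweight_diff:
  assumes "\<And>y. 0 < t y" "(\<Sum>y\<in>UNIV. t y) = 1" "\<And>y. 0 < t' y" "(\<Sum>y\<in>UNIV. t' y) = 1" "\<And>y. 0 < s y"
  shows "sgn (wmean (\<lambda>y. t y * s y) u - wmean (\<lambda>y. t' y * s y) u) = sgn (u True - u False) * sgn (t True - t' True)"
proof -
  have t_False: "t False = 1 - t True" "t' False = 1 - t' True"
    using assms(2,4) by (simp_all add: UNIV_bool)
  have "t True * s True * (t' False * s False) - t False * s False * (t' True * s True)
      = s True * s False * (t True - t' True)"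
    unfolding t_False by (simp add: algebra_simps)
  then show ?thesis
    using assms by (subst sgn_wmean_diff) (simp_all add: sgn_mult)
qed

lemma sgn_wmean_reweight_bias:
  assumes "\<And>y. 0 < t y" "\<And>y. 0 < s y"
  shows "sgn (wmean (\<lambda>y. t y * s y) u - wmean t u) = sgn (u True - u False) * sgn (s True - s False)"
proof -
  have "t True * s True * t False - t False * s False * t True = t True * t False * (s True - s False)"
    by (simp add: algebra_simps)
  then show ?thesis
    using assms by (subst sgn_wmean_diff) (simp_all add: sgn_mult)
qed

lemma sgn_pos_combination:
  fixes a b p q :: real
  assumes "sgn a = sgn b" "0 < p" "0 < q"
  shows "sgn (p * a + q * b) = sgn a"
proof -
  consider "0 < a" "0 < b" | "a = 0" "b = 0" | "a < 0" "b < 0"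
    using assms(1) by (auto simp: sgn_if split: if_splits)
  then show ?thesis
    using assms(2,3) by cases (simp_all add: add_pos_pos add_neg_neg mult_pos_neg)
qed

lemma le_if_sgn_diff_eq_sgn_product:
  fixes s t a b c e :: real
  assumes "sgn (s - t) = sgn ((a - b) * (c - e))"
  shows "(b \<le> a \<and> e \<le> c) \<or> (a \<le> b \<and> c \<le> e) \<Longrightarrow> t \<le> s"
    and "(b \<le> a \<and> c \<le> e) \<or> (a \<le> b \<and> e \<le> c) \<Longrightarrow> s \<le> t"
proof -
  have "t \<le> s \<longleftrightarrow> 0 \<le> (a - b) * (c - e)" "s \<le> t \<longleftrightarrow> (a - b) * (c - e) \<le> 0"
    using zero_le_sgn_iff[of "s - t"] sgn_le_0_iff[of "s - t"] assms by simp_all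
  then show "(b \<le> a \<and> e \<le> c) \<or> (a \<le> b \<and> c \<le> e) \<Longrightarrow> t \<le> s"
    and "(b \<le> a \<and> c \<le> e) \<or> (a \<le> b \<and> e \<le> c) \<Longrightarrow> s \<le> t"
    by (auto simp: zero_le_mult_iff mult_le_0_iff)
qed

section \<open>Random variables with finitely many values\<close>

lemma pr_mult_cprob: "pr M Q \<noteq> 0 \<Longrightarrow> pr M Q * cprob M P Q = pr M (\<lambda>\<omega>. P \<omega> \<and> Q \<omega>)"
  by (simp add: cprob_def)

lemma (in prob_space) pr_eq_sum_values:
  fixes X :: "'a \<Rightarrow> 'b::finite"
  assumes [measurable]: "X \<in> measurable M (count_space UNIV)" "Measurable.pred M Q"
  shows "pr M Q = (\<Sum>y\<in>UNIV. pr M (\<lambda>\<omega>. Q \<omega> \<and> X \<omega> = y))"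
  unfolding pr_def by (rule prob_sum) auto

lemma (in prob_space) pr_values_sum_1:
  fixes X :: "'a \<Rightarrow> 'b::finite"
  assumes [measurable]: "X \<in> measurable M (count_space UNIV)"
  shows "(\<Sum>y\<in>UNIV. pr M (\<lambda>\<omega>. X \<omega> = y)) = 1"
  using pr_eq_sum_values[of X "\<lambda>_. True"] by (simp add: pr_def prob_space)

lemma (in prob_space) cprob_values_sum_1:
  fixes X :: "'a \<Rightarrow> 'b::finite"
  assumes [measurable]: "X \<in> measurable M (count_space UNIV)" "Measurable.pred M Q"
    and "pr M Q \<noteq> 0"
  shows "(\<Sum>y\<in>UNIV. cprob M (\<lambda>\<omega>. X \<omega> = y) Q) = 1"
proof -
  have "(\<lambda>\<omega>. X \<omega> = y \<and> Q \<omega>) = (\<lambda>\<omega>. Q \<omega> \<and> X \<omega> = y)" for y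
    by auto
  then show ?thesis
    using assms(3) by (simp add: cprob_def sum_divide_distrib[symmetric] pr_eq_sum_values[OF assms(1,2), symmetric])
qed

lemma (in prob_space) set_integral_eq_sum_values:
  fixes X :: "'a \<Rightarrow> 'b::finite" and Y :: "'a \<Rightarrow> real"
  assumes [measurable]: "X \<in> measurable M (count_space UNIV)" "Measurable.pred M Q"
    and "integrable M Y"
  shows "(LINT \<omega>:{\<omega>\<in>space M. Q \<omega>}|M. Y \<omega>) = (\<Sum>y\<in>UNIV. LINT \<omega>:{\<omega>\<in>space M. Q \<omega> \<and> X \<omega> = y}|M. Y \<omega>)"
proof -
  have "{\<omega>\<in>space M. Q \<omega>} = (\<Union>y. {\<omega>\<in>space M. Q \<omega> \<and> X \<omega> = y})"
    by auto
  moreover have "set_integrable M {\<omega>\<in>space M. Q \<omega> \<and> X \<omega> = y} Y" for y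
    unfolding set_integrable_def by (rule integrable_mult_indicator) (auto simp: assms(3))
  ultimately show ?thesis
    by (simp only:) (rule set_integral_finite_Union, auto simp: disjoint_family_on_def)
qed

lemma (in prob_space) cexp_eq_wmean:
  fixes X :: "'a \<Rightarrow> 'b::finite"
  assumes [measurable]: "X \<in> measurable M (count_space UNIV)" "Measurable.pred M Q"
    and "integrable M Y" and "\<And>y. pr M (\<lambda>\<omega>. Q \<omega> \<and> X \<omega> = y) \<noteq> 0"
  shows "cexp M Y Q = wmean (\<lambda>y. pr M (\<lambda>\<omega>. Q \<omega> \<and> X \<omega> = y)) (\<lambda>y. cexp M Y (\<lambda>\<omega>. Q \<omega> \<and> X \<omega> = y))"
  unfolding cexp_def wmean_def set_integral_eq_sum_values[OF assms(1-3)] pr_eq_sum_values[OF assms(1,2)]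
  using assms(4) by simp

lemma (in finite_measure) set_integral_scaled_distribution:
  fixes Y :: "'a \<Rightarrow> real"
  assumes [measurable]: "S \<in> sets M" "T \<in> sets M" "Y \<in> borel_measurable M" and "0 \<le> k"
    and scaled: "\<And>B. B \<in> sets borel \<Longrightarrow> measure M (S \<inter> Y -` B) = k * measure M (T \<inter> Y -` B)"
  shows "(LINT \<omega>:S|M. Y \<omega>) = k * (LINT \<omega>:T|M. Y \<omega>)"
proof -
  define law where "law U = distr (density M (indicator U)) borel Y" for U
  have set_integral_law: "(LINT \<omega>:U|M. Y \<omega>) = (\<integral>y. y \<partial>law U)" if [measurable]: "U \<in> sets M" for U
    unfolding law_def set_lebesgue_integral_def
    using integral_density[of Y M "indicator U"]
    by (simp add: integral_distr ennreal_indicator)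
  have emeasure_law: "emeasure (law U) B = emeasure M (U \<inter> Y -` B)"
    if [measurable]: "U \<in> sets M" "B \<in> sets borel" for U B
  proof -
    have "U \<inter> (Y -` B \<inter> space M) = U \<inter> Y -` B"
      using sets.sets_into_space[OF that(1)] by auto
    then show ?thesis
      unfolding law_def by (simp add: emeasure_distr emeasure_restricted)
  qed
  have "law S = density (law T) (\<lambda>_. ennreal k)"
  proof (rule measure_eqI)
    fix B assume "B \<in> sets (law S)"
    then have [measurable]: "B \<in> sets borel"
      by (simp add: law_def)
    have "emeasure (law S) B = ennreal k * emeasure (law T) B"
      using \<open>0 \<le> k\<close> by (simp add: emeasure_law emeasure_eq_measure scaled ennreal_mult)
    also have "\<dots> = emeasure (density (law T) (\<lambda>_. ennreal k)) B"
      by (subst emeasure_density_const) (simp_all add: law_def)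
    finally show "emeasure (law S) B = emeasure (density (law T) (\<lambda>_. ennreal k)) B" .
  qed (simp add: law_def)
  moreover have "(\<integral>y. y \<partial>density (law T) (\<lambda>_. ennreal k)) = k * (\<integral>y. y \<partial>law T)"
    using \<open>0 \<le> k\<close> by (subst integral_density) (auto simp: law_def)
  ultimately show ?thesis
    by (simp add: set_integral_law)
qed

lemma (in prob_space) indep_var_finiteI:
  fixes X :: "'a \<Rightarrow> 'b::finite" and Z :: "'a \<Rightarrow> 'b"
  assumes [measurable]: "X \<in> measurable M (count_space UNIV)" "Z \<in> measurable M (count_space UNIV)"
    and product: "\<And>y z. pr M (\<lambda>\<omega>. X \<omega> = y \<and> Z \<omega> = z) = pr M (\<lambda>\<omega>. X \<omega> = y) * pr M (\<lambda>\<omega>. Z \<omega> = z)"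
  shows "indep_var (count_space UNIV) X (count_space UNIV) Z"
proof -
  let ?preimages = "\<lambda>V. {V -` S \<inter> space M | S. S \<in> sets (count_space UNIV)}"
  have Int_stable_preimages: "Int_stable (?preimages V)" for V :: "'a \<Rightarrow> 'b"
  proof (rule Int_stableI)
    fix a b assume "a \<in> ?preimages V" "b \<in> ?preimages V"
    then obtain S T where "a = V -` S \<inter> space M" "b = V -` T \<inter> space M"
      by auto
    then have "a \<inter> b = V -` (S \<inter> T) \<inter> space M"
      by auto
    then show "a \<inter> b \<in> ?preimages V"
      by (auto simp del: vimage_Int)
  qed
  have pr_in: "pr M (\<lambda>\<omega>. V \<omega> \<in> S) = (\<Sum>y\<in>S. pr M (\<lambda>\<omega>. V \<omega> = y))"
    if [measurable]: "V \<in> measurable M (count_space UNIV)" for V :: "'a \<Rightarrow> 'b" and S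
    unfolding pr_def by (rule prob_sum) auto
  have "prob (X -` S \<inter> space M \<inter> (Z -` T \<inter> space M)) = prob (X -` S \<inter> space M) * prob (Z -` T \<inter> space M)"
    for S T
  proof -
    have "pr M (\<lambda>\<omega>. X \<omega> \<in> S \<and> Z \<omega> \<in> T) = (\<Sum>p\<in>S \<times> T. pr M (\<lambda>\<omega>. X \<omega> = fst p \<and> Z \<omega> = snd p))"
      unfolding pr_def by (rule prob_sum) auto
    also have "\<dots> = (\<Sum>y\<in>S. \<Sum>z\<in>T. pr M (\<lambda>\<omega>. X \<omega> = y) * pr M (\<lambda>\<omega>. Z \<omega> = z))"
      by (simp add: sum.cartesian_product case_prod_beta product)
    also have "\<dots> = pr M (\<lambda>\<omega>. X \<omega> \<in> S) * pr M (\<lambda>\<omega>. Z \<omega> \<in> T)"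
      by (simp add: pr_in sum_product)
    moreover have "X -` S \<inter> space M \<inter> (Z -` T \<inter> space M) = {\<omega>\<in>space M. X \<omega> \<in> S \<and> Z \<omega> \<in> T}"
      "X -` S \<inter> space M = {\<omega>\<in>space M. X \<omega> \<in> S}" "Z -` T \<inter> space M = {\<omega>\<in>space M. Z \<omega> \<in> T}"
      by auto
    ultimately show ?thesis
      by (simp add: pr_def)
  qed
  then have "indep_set (?preimages X) (?preimages Z)"
    by (auto simp: indep_sets2_eq)
  then have "indep_set (sigma_sets (space M) (?preimages X)) (sigma_sets (space M) (?preimages Z))"
    by (intro indep_set_sigma_sets Int_stable_preimages)
  then show ?thesis
    unfolding indep_var_eq by simp
qed

section \<open>The confounder-proxy model\<close>

locale proxy_model = prob_space M
  for M :: "'a measure" and A C D :: "'a \<Rightarrow> bool" and Y :: "'a \<Rightarrow> real" +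
  assumes A_measurable [measurable]: "A \<in> measurable M (count_space UNIV)"
    and C_measurable [measurable]: "C \<in> measurable M (count_space UNIV)"
    and D_measurable [measurable]: "D \<in> measurable M (count_space UNIV)"
    and Y_measurable [measurable]: "Y \<in> borel_measurable M"
    and Y_integrable: "integrable M Y"
    and factor: "\<And>x y z B. B \<in> sets borel \<Longrightarrow>
        pr M (\<lambda>\<omega>. A \<omega> = x \<and> C \<omega> = y \<and> D \<omega> = z \<and> Y \<omega> \<in> B)
        = pr M (\<lambda>\<omega>. D \<omega> = z)
          * cprob M (\<lambda>\<omega>. C \<omega> = y) (\<lambda>\<omega>. D \<omega> = z)
          * cprob M (\<lambda>\<omega>. A \<omega> = x) (\<lambda>\<omega>. C \<omega> = y)
          * cprob M (\<lambda>\<omega>. Y \<omega> \<in> B) (\<lambda>\<omega>. A \<omega> = x \<and> C \<omega> = y)"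
    and C_D_dependent: "\<not> indep_var (count_space UNIV) C (count_space UNIV) D"
    and atom_pos: "\<And>x y z. pr M (\<lambda>\<omega>. A \<omega> = x \<and> C \<omega> = y \<and> D \<omega> = z) > 0"
begin

lemma pr_pos:
  assumes [measurable]: "Measurable.pred M Q" and "\<And>\<omega>. A \<omega> = x \<and> C \<omega> = y \<and> D \<omega> = z \<Longrightarrow> Q \<omega>"
  shows "0 < pr M Q"
proof -
  have "pr M (\<lambda>\<omega>. A \<omega> = x \<and> C \<omega> = y \<and> D \<omega> = z) \<le> pr M Q"
    unfolding pr_def using assms(2) by (intro finite_measure_mono) auto
  then show ?thesis
    using atom_pos[of x y z] by linarith
qed

lemma pr_D_pos: "0 < pr M (\<lambda>\<omega>. D \<omega> = z)"
  by (rule pr_pos[of _ True True z]) auto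

lemma pr_C_pos: "0 < pr M (\<lambda>\<omega>. C \<omega> = y)"
  by (rule pr_pos[of _ True y True]) auto

lemma cprob_pos:
  "0 < cprob M (\<lambda>\<omega>. C \<omega> = y) (\<lambda>\<omega>. D \<omega> = z)"
  "0 < cprob M (\<lambda>\<omega>. A \<omega> = x) (\<lambda>\<omega>. C \<omega> = y)"
  unfolding cprob_def
  by (intro divide_pos_pos pr_pos[of _ x y z]; simp)+

lemma cprob_C_given_D_sum_1: "(\<Sum>y\<in>UNIV. cprob M (\<lambda>\<omega>. C \<omega> = y) (\<lambda>\<omega>. D \<omega> = z)) = 1"
  using pr_D_pos[of z] by (intro cprob_values_sum_1) auto

lemma atom_factor:
  "pr M (\<lambda>\<omega>. A \<omega> = x \<and> C \<omega> = y \<and> D \<omega> = z)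
     = pr M (\<lambda>\<omega>. D \<omega> = z) * cprob M (\<lambda>\<omega>. C \<omega> = y) (\<lambda>\<omega>. D \<omega> = z) * cprob M (\<lambda>\<omega>. A \<omega> = x) (\<lambda>\<omega>. C \<omega> = y)"
proof -
  have "0 < pr M (\<lambda>\<omega>. A \<omega> = x \<and> C \<omega> = y)"
    by (rule pr_pos[of _ x y z]) auto
  then show ?thesis
    using factor[of UNIV x y z] by (simp add: cprob_def)
qed

text \<open>By the factorization, the law of \<open>Y\<close> on the atom \<open>{A = x, C = y, D = z}\<close> is a multiple
  of its law on \<open>{A = x, C = y}\<close>: \<open>Y\<close> does not depend on \<open>D\<close> given \<open>A\<close> and \<open>C\<close>.\<close>

lemma atom_integral:
  "(LINT \<omega>:{\<omega>\<in>space M. A \<omega> = x \<and> C \<omega> = y \<and> D \<omega> = z}|M. Y \<omega>)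
     = pr M (\<lambda>\<omega>. A \<omega> = x \<and> C \<omega> = y \<and> D \<omega> = z) * cexp M Y (\<lambda>\<omega>. A \<omega> = x \<and> C \<omega> = y)"
proof -
  define k where "k = pr M (\<lambda>\<omega>. A \<omega> = x \<and> C \<omega> = y \<and> D \<omega> = z) / pr M (\<lambda>\<omega>. A \<omega> = x \<and> C \<omega> = y)"
  have "0 < pr M (\<lambda>\<omega>. A \<omega> = x \<and> C \<omega> = y)"
    by (rule pr_pos[of _ x y z]) auto
  then have "0 \<le> k"
    using atom_pos[of x y z] by (simp add: k_def)
  have "(LINT \<omega>:{\<omega>\<in>space M. A \<omega> = x \<and> C \<omega> = y \<and> D \<omega> = z}|M. Y \<omega>)
      = k * (LINT \<omega>:{\<omega>\<in>space M. A \<omega> = x \<and> C \<omega> = y}|M. Y \<omega>)"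
  proof (rule set_integral_scaled_distribution)
    fix B :: "real set" assume "B \<in> sets borel"
    then show "measure M ({\<omega>\<in>space M. A \<omega> = x \<and> C \<omega> = y \<and> D \<omega> = z} \<inter> Y -` B)
        = k * measure M ({\<omega>\<in>space M. A \<omega> = x \<and> C \<omega> = y} \<inter> Y -` B)"
      using factor[of B x y z] atom_factor[of x y z]
      by (auto simp: k_def pr_def cprob_def Int_def conj_ac intro!: arg_cong[of _ _ "measure M"])
  qed (auto simp: \<open>0 \<le> k\<close>)
  then show ?thesis
    by (simp add: k_def cexp_def)
qed

lemma cexp_given_A_D:
  "cexp M Y (\<lambda>\<omega>. A \<omega> = x \<and> D \<omega> = z)
     = wmean (\<lambda>y. cprob M (\<lambda>\<omega>. C \<omega> = y) (\<lambda>\<omega>. D \<omega> = z) * cprob M (\<lambda>\<omega>. A \<omega> = x) (\<lambda>\<omega>. C \<omega> = y))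
         (\<lambda>y. cexp M Y (\<lambda>\<omega>. A \<omega> = x \<and> C \<omega> = y))"
proof -
  have atom: "(\<lambda>\<omega>. (A \<omega> = x \<and> D \<omega> = z) \<and> C \<omega> = y) = (\<lambda>\<omega>. A \<omega> = x \<and> C \<omega> = y \<and> D \<omega> = z)" for y
    by auto
  have cexp_atom: "cexp M Y (\<lambda>\<omega>. A \<omega> = x \<and> C \<omega> = y \<and> D \<omega> = z) = cexp M Y (\<lambda>\<omega>. A \<omega> = x \<and> C \<omega> = y)" for y
    using atom_pos[of x y z] by (simp add: cexp_def atom_integral)
  have "pr M (\<lambda>\<omega>. (A \<omega> = x \<and> D \<omega> = z) \<and> C \<omega> = y) \<noteq> 0" for y
    using atom_pos[of x y z] unfolding atom by simp
  then have "cexp M Y (\<lambda>\<omega>. A \<omega> = x \<and> D \<omega> = z)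
      = wmean (\<lambda>y. pr M (\<lambda>\<omega>. (A \<omega> = x \<and> D \<omega> = z) \<and> C \<omega> = y)) (\<lambda>y. cexp M Y (\<lambda>\<omega>. (A \<omega> = x \<and> D \<omega> = z) \<and> C \<omega> = y))"
    by (intro cexp_eq_wmean Y_integrable) auto
  also have "\<dots> = wmean (\<lambda>y. pr M (\<lambda>\<omega>. D \<omega> = z) * (cprob M (\<lambda>\<omega>. C \<omega> = y) (\<lambda>\<omega>. D \<omega> = z) * cprob M (\<lambda>\<omega>. A \<omega> = x) (\<lambda>\<omega>. C \<omega> = y)))
          (\<lambda>y. cexp M Y (\<lambda>\<omega>. A \<omega> = x \<and> C \<omega> = y))"
    by (simp only: atom atom_factor cexp_atom mult.assoc)
  also have "\<dots> = wmean (\<lambda>y. cprob M (\<lambda>\<omega>. C \<omega> = y) (\<lambda>\<omega>. D \<omega> = z) * cprob M (\<lambda>\<omega>. A \<omega> = x) (\<lambda>\<omega>. C \<omega> = y))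
          (\<lambda>y. cexp M Y (\<lambda>\<omega>. A \<omega> = x \<and> C \<omega> = y))"
    using pr_D_pos[of z] by (simp add: wmean_scale)
  finally show ?thesis .
qed

lemma cexp_given_A:
  "cexp M Y (\<lambda>\<omega>. A \<omega> = x)
     = wmean (\<lambda>y. pr M (\<lambda>\<omega>. C \<omega> = y) * cprob M (\<lambda>\<omega>. A \<omega> = x) (\<lambda>\<omega>. C \<omega> = y))
         (\<lambda>y. cexp M Y (\<lambda>\<omega>. A \<omega> = x \<and> C \<omega> = y))"
proof -
  have "0 < pr M (\<lambda>\<omega>. A \<omega> = x \<and> C \<omega> = y)" for y
    by (rule pr_pos[of _ x y True]) auto
  then have "pr M (\<lambda>\<omega>. A \<omega> = x \<and> C \<omega> = y) \<noteq> 0" for y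
    by (metis less_irrefl)
  then have "cexp M Y (\<lambda>\<omega>. A \<omega> = x)
      = wmean (\<lambda>y. pr M (\<lambda>\<omega>. A \<omega> = x \<and> C \<omega> = y)) (\<lambda>y. cexp M Y (\<lambda>\<omega>. A \<omega> = x \<and> C \<omega> = y))"
    by (intro cexp_eq_wmean Y_integrable) auto
  moreover have "pr M (\<lambda>\<omega>. C \<omega> = y) * cprob M (\<lambda>\<omega>. A \<omega> = x) (\<lambda>\<omega>. C \<omega> = y) = pr M (\<lambda>\<omega>. A \<omega> = x \<and> C \<omega> = y)" for y
    using pr_C_pos[of y] by (simp add: pr_mult_cprob)
  ultimately show ?thesis
    by simp
qed

lemma cprob_A_given_D:
  "cprob M (\<lambda>\<omega>. A \<omega> = x) (\<lambda>\<omega>. D \<omega> = z)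
     = wmean (\<lambda>y. cprob M (\<lambda>\<omega>. C \<omega> = y) (\<lambda>\<omega>. D \<omega> = z)) (\<lambda>y. cprob M (\<lambda>\<omega>. A \<omega> = x) (\<lambda>\<omega>. C \<omega> = y))"
proof -
  have atom: "(\<lambda>\<omega>. (A \<omega> = x \<and> D \<omega> = z) \<and> C \<omega> = y) = (\<lambda>\<omega>. A \<omega> = x \<and> C \<omega> = y \<and> D \<omega> = z)" for y
    by auto
  have "pr M (\<lambda>\<omega>. A \<omega> = x \<and> D \<omega> = z) = (\<Sum>y\<in>UNIV. pr M (\<lambda>\<omega>. (A \<omega> = x \<and> D \<omega> = z) \<and> C \<omega> = y))"
    by (rule pr_eq_sum_values) auto
  also have "\<dots> = pr M (\<lambda>\<omega>. D \<omega> = z)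
      * (\<Sum>y\<in>UNIV. cprob M (\<lambda>\<omega>. C \<omega> = y) (\<lambda>\<omega>. D \<omega> = z) * cprob M (\<lambda>\<omega>. A \<omega> = x) (\<lambda>\<omega>. C \<omega> = y))"
    by (simp only: atom atom_factor sum_distrib_left mult.assoc)
  finally have "cprob M (\<lambda>\<omega>. A \<omega> = x) (\<lambda>\<omega>. D \<omega> = z)
      = (\<Sum>y\<in>UNIV. cprob M (\<lambda>\<omega>. C \<omega> = y) (\<lambda>\<omega>. D \<omega> = z) * cprob M (\<lambda>\<omega>. A \<omega> = x) (\<lambda>\<omega>. C \<omega> = y))"
    using pr_D_pos[of z] by (simp add: cprob_def[of M "\<lambda>\<omega>. A \<omega> = x" "\<lambda>\<omega>. D \<omega> = z"])
  then show ?thesis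
    by (simp only: wmean_distribution cprob_C_given_D_sum_1)
qed

lemma pr_C_total:
  "pr M (\<lambda>\<omega>. C \<omega> = y) = (\<Sum>z\<in>UNIV. pr M (\<lambda>\<omega>. D \<omega> = z) * cprob M (\<lambda>\<omega>. C \<omega> = y) (\<lambda>\<omega>. D \<omega> = z))"
proof -
  have "pr M (\<lambda>\<omega>. D \<omega> = z) \<noteq> 0" for z
    using pr_D_pos[of z] by simp
  then show ?thesis
    by (subst pr_eq_sum_values[of D]) (auto simp: pr_mult_cprob)
qed

lemma cprob_C_given_D_differs:
  "cprob M (\<lambda>\<omega>. C \<omega> = True) (\<lambda>\<omega>. D \<omega> = True) \<noteq> cprob M (\<lambda>\<omega>. C \<omega> = True) (\<lambda>\<omega>. D \<omega> = False)"
proof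
  let ?q = "\<lambda>y z. cprob M (\<lambda>\<omega>. C \<omega> = y) (\<lambda>\<omega>. D \<omega> = z)"
  assume q_True: "?q True True = ?q True False"
  have q_sum: "?q True z + ?q False z = 1" for z
    using cprob_C_given_D_sum_1[of z] by (simp add: UNIV_bool add.commute)
  have q_const: "?q y z = ?q y True" for y z
    using q_True q_sum[of True] q_sum[of False] by (induct y; induct z) linarith+
  have "pr M (\<lambda>\<omega>. D \<omega> = True) + pr M (\<lambda>\<omega>. D \<omega> = False) = 1"
    using pr_values_sum_1[OF D_measurable] by (simp add: UNIV_bool add.commute)
  then have pr_C: "pr M (\<lambda>\<omega>. C \<omega> = y) = ?q y True" for y
    using pr_C_total[of y] q_const[of y False] by (simp add: UNIV_bool flip: distrib_right)
  have "pr M (\<lambda>\<omega>. C \<omega> = y \<and> D \<omega> = z) = pr M (\<lambda>\<omega>. C \<omega> = y) * pr M (\<lambda>\<omega>. D \<omega> = z)" for y z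
  proof -
    have "pr M (\<lambda>\<omega>. C \<omega> = y \<and> D \<omega> = z) = pr M (\<lambda>\<omega>. D \<omega> = z) * ?q y z"
      using pr_D_pos[of z] by (simp add: pr_mult_cprob)
    then show ?thesis
      using q_const[of y z] pr_C[of y] by (simp only: mult.commute)
  qed
  then have "indep_var (count_space UNIV) C (count_space UNIV) D"
    by (intro indep_var_finiteI) simp_all
  with C_D_dependent show False
    by simp
qed

lemma causal_eff_eq_wmean:
  "causal_eff M A C Y x = wmean (\<lambda>y. pr M (\<lambda>\<omega>. C \<omega> = y)) (\<lambda>y. cexp M Y (\<lambda>\<omega>. A \<omega> = x \<and> C \<omega> = y))"
proof -
  have "(\<Sum>y\<in>UNIV. pr M (\<lambda>\<omega>. C \<omega> = y)) = 1"
    by (rule pr_values_sum_1) simp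
  then show ?thesis
    by (simp add: causal_eff_def wmean_distribution UNIV_bool add.commute mult.commute)
qed

lemma causal_eff_eq_mixture:
  "causal_eff M A C Y x
     = (\<Sum>z\<in>UNIV. pr M (\<lambda>\<omega>. D \<omega> = z)
          * wmean (\<lambda>y. cprob M (\<lambda>\<omega>. C \<omega> = y) (\<lambda>\<omega>. D \<omega> = z)) (\<lambda>y. cexp M Y (\<lambda>\<omega>. A \<omega> = x \<and> C \<omega> = y)))"
proof -
  let ?m = "\<lambda>y. cexp M Y (\<lambda>\<omega>. A \<omega> = x \<and> C \<omega> = y)"
  let ?t = "\<lambda>z y. cprob M (\<lambda>\<omega>. C \<omega> = y) (\<lambda>\<omega>. D \<omega> = z)"
  have "(\<Sum>y\<in>UNIV. pr M (\<lambda>\<omega>. C \<omega> = y)) = 1"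
    by (rule pr_values_sum_1) simp
  then have "causal_eff M A C Y x = (\<Sum>y\<in>UNIV. pr M (\<lambda>\<omega>. C \<omega> = y) * ?m y)"
    by (simp add: causal_eff_eq_wmean wmean_distribution)
  also have "\<dots> = (\<Sum>y\<in>UNIV. \<Sum>z\<in>UNIV. pr M (\<lambda>\<omega>. D \<omega> = z) * (?t z y * ?m y))"
    by (simp only: pr_C_total sum_distrib_right mult.assoc)
  also have "\<dots> = (\<Sum>z\<in>UNIV. pr M (\<lambda>\<omega>. D \<omega> = z) * (\<Sum>y\<in>UNIV. ?t z y * ?m y))"
    by (subst sum.swap) (simp only: sum_distrib_left)
  also have "\<dots> = (\<Sum>z\<in>UNIV. pr M (\<lambda>\<omega>. D \<omega> = z) * wmean (?t z) ?m)"
    by (simp only: wmean_distribution cprob_C_given_D_sum_1)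
  finally show ?thesis .
qed

lemma sgn_bias_obs:
  "sgn (S_obs M A Y x - causal_eff M A C Y x)
     = sgn (cexp M Y (\<lambda>\<omega>. A \<omega> = x \<and> C \<omega>) - cexp M Y (\<lambda>\<omega>. A \<omega> = x \<and> \<not> C \<omega>))
       * sgn (cprob M (\<lambda>\<omega>. A \<omega> = x) C - cprob M (\<lambda>\<omega>. A \<omega> = x) (\<lambda>\<omega>. \<not> C \<omega>))"
  unfolding S_obs_def cexp_given_A causal_eff_eq_wmean
  by (subst sgn_wmean_reweight_bias) (simp_all add: pr_C_pos cprob_pos)

lemma sgn_bias_adjD:
  "sgn (S_adjD M A D Y x - causal_eff M A C Y x)
     = sgn (cexp M Y (\<lambda>\<omega>. A \<omega> = x \<and> C \<omega>) - cexp M Y (\<lambda>\<omega>. A \<omega> = x \<and> \<not> C \<omega>))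
       * sgn (cprob M (\<lambda>\<omega>. A \<omega> = x) C - cprob M (\<lambda>\<omega>. A \<omega> = x) (\<lambda>\<omega>. \<not> C \<omega>))"
proof -
  let ?m = "\<lambda>y. cexp M Y (\<lambda>\<omega>. A \<omega> = x \<and> C \<omega> = y)"
  let ?s = "\<lambda>y. cprob M (\<lambda>\<omega>. A \<omega> = x) (\<lambda>\<omega>. C \<omega> = y)"
  let ?t = "\<lambda>z y. cprob M (\<lambda>\<omega>. C \<omega> = y) (\<lambda>\<omega>. D \<omega> = z)"
  let ?bias = "\<lambda>z. wmean (\<lambda>y. ?t z y * ?s y) ?m - wmean (?t z) ?m"
  have diff: "S_adjD M A D Y x - causal_eff M A C Y x
      = pr M (\<lambda>\<omega>. D \<omega> = True) * ?bias True + pr M (\<lambda>\<omega>. D \<omega> = False) * ?bias False"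
    using cexp_given_A_D[of x True] cexp_given_A_D[of x False]
    by (simp add: S_adjD_def causal_eff_eq_mixture UNIV_bool algebra_simps)
  have sgn_bias: "sgn (?bias z) = sgn (?m True - ?m False) * sgn (?s True - ?s False)" for z
    by (rule sgn_wmean_reweight_bias) (simp_all add: cprob_pos)
  show ?thesis
    unfolding diff by (subst sgn_pos_combination) (simp_all only: sgn_bias pr_D_pos, simp)
qed

lemma sgn_trend_product:
  "sgn ((cexp M Y (\<lambda>\<omega>. A \<omega> = x \<and> D \<omega>) - cexp M Y (\<lambda>\<omega>. A \<omega> = x \<and> \<not> D \<omega>)) * (cprob M A D - cprob M A (\<lambda>\<omega>. \<not> D \<omega>)))
     = sgn (cexp M Y (\<lambda>\<omega>. A \<omega> = x \<and> C \<omega>) - cexp M Y (\<lambda>\<omega>. A \<omega> = x \<and> \<not> C \<omega>))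
       * sgn (cprob M A C - cprob M A (\<lambda>\<omega>. \<not> C \<omega>))"
proof -
  let ?m = "\<lambda>y. cexp M Y (\<lambda>\<omega>. A \<omega> = x \<and> C \<omega> = y)"
  let ?s = "\<lambda>y. cprob M (\<lambda>\<omega>. A \<omega> = x) (\<lambda>\<omega>. C \<omega> = y)"
  let ?r = "\<lambda>y. cprob M (\<lambda>\<omega>. A \<omega> = True) (\<lambda>\<omega>. C \<omega> = y)"
  let ?t = "\<lambda>z y. cprob M (\<lambda>\<omega>. C \<omega> = y) (\<lambda>\<omega>. D \<omega> = z)"
  let ?\<delta> = "?t True True - ?t False True"
  have "sgn (wmean (\<lambda>y. ?t True y * ?s y) ?m - wmean (\<lambda>y. ?t False y * ?s y) ?m)
      = sgn (?m True - ?m False) * sgn ?\<delta>"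
    by (rule sgn_wmean_reweight_diff) (rule cprob_pos cprob_C_given_D_sum_1)+
  then have EY: "sgn (cexp M Y (\<lambda>\<omega>. A \<omega> = x \<and> D \<omega>) - cexp M Y (\<lambda>\<omega>. A \<omega> = x \<and> \<not> D \<omega>))
      = sgn (?m True - ?m False) * sgn ?\<delta>"
    using cexp_given_A_D[of x True] cexp_given_A_D[of x False] by simp
  have "sgn (wmean (\<lambda>y. ?t True y * 1) ?r - wmean (\<lambda>y. ?t False y * 1) ?r)
      = sgn (?r True - ?r False) * sgn ?\<delta>"
    by (rule sgn_wmean_reweight_diff) (rule cprob_pos cprob_C_given_D_sum_1 zero_less_one)+
  then have EA: "sgn (cprob M A D - cprob M A (\<lambda>\<omega>. \<not> D \<omega>)) = sgn (?r True - ?r False) * sgn ?\<delta>"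
    using cprob_A_given_D[of True True] cprob_A_given_D[of True False] by simp
  have "sgn ?\<delta> * sgn ?\<delta> = 1"
    using cprob_C_given_D_differs by (simp add: sgn_if)
  moreover have "sgn ((cexp M Y (\<lambda>\<omega>. A \<omega> = x \<and> D \<omega>) - cexp M Y (\<lambda>\<omega>. A \<omega> = x \<and> \<not> D \<omega>)) * (cprob M A D - cprob M A (\<lambda>\<omega>. \<not> D \<omega>)))
      = sgn (?m True - ?m False) * sgn (?r True - ?r False) * (sgn ?\<delta> * sgn ?\<delta>)"
    by (simp only: sgn_mult EY EA mult_ac)
  ultimately show ?thesis
    by simp
qed

lemma cprob_not_A_given_C: "cprob M (\<lambda>\<omega>. \<not> A \<omega>) (\<lambda>\<omega>. C \<omega> = y) = 1 - cprob M A (\<lambda>\<omega>. C \<omega> = y)"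
proof -
  have "(\<Sum>x\<in>UNIV. cprob M (\<lambda>\<omega>. A \<omega> = x) (\<lambda>\<omega>. C \<omega> = y)) = 1"
    using pr_C_pos[of y] by (intro cprob_values_sum_1) auto
  then show ?thesis
    by (simp add: UNIV_bool)
qed

lemma sgn_bias_eq_trend_product:
  assumes "S \<in> {S_adjD M A D Y, S_obs M A Y}"
  shows "sgn (S x - causal_eff M A C Y x)
    = (if x then 1 else -1)
      * sgn ((cexp M Y (\<lambda>\<omega>. A \<omega> = x \<and> D \<omega>) - cexp M Y (\<lambda>\<omega>. A \<omega> = x \<and> \<not> D \<omega>)) * (cprob M A D - cprob M A (\<lambda>\<omega>. \<not> D \<omega>)))"
proof -
  have "sgn (cprob M (\<lambda>\<omega>. A \<omega> = x) C - cprob M (\<lambda>\<omega>. A \<omega> = x) (\<lambda>\<omega>. \<not> C \<omega>))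
      = (if x then 1 else -1) * sgn (cprob M A C - cprob M A (\<lambda>\<omega>. \<not> C \<omega>))"
    using cprob_not_A_given_C[of True] cprob_not_A_given_C[of False]
    by (cases x) (simp_all add: sgn_minus[symmetric])
  moreover have "sgn (S x - causal_eff M A C Y x)
      = sgn (cexp M Y (\<lambda>\<omega>. A \<omega> = x \<and> C \<omega>) - cexp M Y (\<lambda>\<omega>. A \<omega> = x \<and> \<not> C \<omega>))
        * sgn (cprob M (\<lambda>\<omega>. A \<omega> = x) C - cprob M (\<lambda>\<omega>. A \<omega> = x) (\<lambda>\<omega>. \<not> C \<omega>))"
    using assms sgn_bias_adjD sgn_bias_obs by blast
  ultimately show ?thesis
    unfolding sgn_trend_product by (simp only: mult_ac)
qed

end

theorem corollary4:
  fixes M :: "'a measure" and A C D :: "'a \<Rightarrow> bool" and Y :: "'a \<Rightarrow> real"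
  assumes "prob_space M"
    and "A \<in> measurable M (count_space UNIV)"
    and "C \<in> measurable M (count_space UNIV)"
    and "D \<in> measurable M (count_space UNIV)"
    and "Y \<in> borel_measurable M"
    and "integrable M Y"
    and factor: "\<And>x y z B. B \<in> sets borel \<Longrightarrow>
        pr M (\<lambda>\<omega>. A \<omega> = x \<and> C \<omega> = y \<and> D \<omega> = z \<and> Y \<omega> \<in> B)
        = pr M (\<lambda>\<omega>. D \<omega> = z)
          * cprob M (\<lambda>\<omega>. C \<omega> = y) (\<lambda>\<omega>. D \<omega> = z)
          * cprob M (\<lambda>\<omega>. A \<omega> = x) (\<lambda>\<omega>. C \<omega> = y)
          * cprob M (\<lambda>\<omega>. Y \<omega> \<in> B) (\<lambda>\<omega>. A \<omega> = x \<and> C \<omega> = y)"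
    and dep: "\<not> prob_space.indep_var M (count_space UNIV) C (count_space UNIV) D"
    and pos: "\<And>x y z. pr M (\<lambda>\<omega>. A \<omega> = x \<and> C \<omega> = y \<and> D \<omega> = z) > 0"
  shows "\<forall>S \<in> {S_adjD M A D Y, S_obs M A Y}.
     (((EY_nondec M A D Y True \<and> EA_nondec M A D) \<or> (EY_noninc M A D Y True \<and> EA_noninc M A D))
        \<longrightarrow> S True \<ge> causal_eff M A C Y True)
   \<and> (((EY_nondec M A D Y True \<and> EA_noninc M A D) \<or> (EY_noninc M A D Y True \<and> EA_nondec M A D))
        \<longrightarrow> S True \<le> causal_eff M A C Y True)
   \<and> (((EY_nondec M A D Y False \<and> EA_nondec M A D) \<or> (EY_noninc M A D Y False \<and> EA_noninc M A D))
        \<longrightarrow> S False \<le> causal_eff M A C Y False)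
   \<and> (((EY_nondec M A D Y False \<and> EA_noninc M A D) \<or> (EY_noninc M A D Y False \<and> EA_nondec M A D))
        \<longrightarrow> S False \<ge> causal_eff M A C Y False)"
proof -
  interpret proxy_model M A C D Y
    by (rule proxy_model.intro[OF assms(1) proxy_model_axioms.intro[OF assms(2-9)]])
  have "sgn (S True - causal_eff M A C Y True)
      = sgn ((cexp M Y (\<lambda>\<omega>. A \<omega> = True \<and> D \<omega>) - cexp M Y (\<lambda>\<omega>. A \<omega> = True \<and> \<not> D \<omega>))
          * (cprob M A D - cprob M A (\<lambda>\<omega>. \<not> D \<omega>)))"
    if "S \<in> {S_adjD M A D Y, S_obs M A Y}" for S
    using sgn_bias_eq_trend_product[OF that, of True] by (simp only: if_True mult_1_left)
  note bias_a = le_if_sgn_diff_eq_sgn_product[OF this]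
  have "sgn (causal_eff M A C Y False - S False)
      = sgn ((cexp M Y (\<lambda>\<omega>. A \<omega> = False \<and> D \<omega>) - cexp M Y (\<lambda>\<omega>. A \<omega> = False \<and> \<not> D \<omega>))
          * (cprob M A D - cprob M A (\<lambda>\<omega>. \<not> D \<omega>)))"
    if "S \<in> {S_adjD M A D Y, S_obs M A Y}" for S
    using sgn_bias_eq_trend_product[OF that, of False]
    by (simp only: if_False mult_minus1) (metis minus_diff_eq sgn_minus minus_minus)
  note bias_not_a = le_if_sgn_diff_eq_sgn_product[OF this]
  show ?thesis
    unfolding EY_nondec_def EY_noninc_def EA_nondec_def EA_noninc_def
    using bias_a bias_not_a by blast
qed

end
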